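(* Let $M=(S,\mathrm{Act},P)$ be an MDP, $T\subseteq S$, $\mathrm{opt}\in\{\min,\max\}$, and let $r\in\mathbb{N}_\infty^S$ satisfy $D^{\overline{\mathrm{opt}}}(r)\le r$ (pointwise). Then for all $s\in S$: if $r(s)<\infty$ then $\Pr^{\mathrm{opt}}_s(\Diamond T)>0$.
   Context: An MDP is a tuple $M=(S,\mathrm{Act},P)$ with $S$ finite, $\mathrm{Act}$ finite, $P\colon S\times\mathrm{Act}\times S\to[0,1]$ with $\sum_{s'}P(s,a,s')\in\{0,1\}$; $\mathrm{Act}(s)=\{a\mid\sum_{s'}P(s,a,s')=1\}$ is nonempty for all $s$; $\mathrm{Post}(s,a)=\{s'\mid P(s,a,s')>0\}$. A strategy is $\sigma\colon S\to\mathrm{Act}$ with $\sigma(s)\in\mathrm{Act}(s)$, inducing a Markov chain with transitions $P(s,\sigma(s),\cdot)$; $\Pr^\sigma_s(\Diamond T)$ is the probability of visiting $T$ from $s$, and $\Pr^{\mathrm{opt}}_s(\Diamond T)=\mathrm{opt}_\sigma\Pr^\sigma_s(\Diamond T)$. $\overline{\min}=\max$, $\overline{\max}=\min$. $\mathbb{N}_\infty=\mathbb{N}\cup\{\infty\}$ with $1+\infty=\infty$. For $\mathrm{opt}'\in\{\min,\max\}$ the distance operator $D^{\mathrm{opt}'}\colon\mathbb{N}_\infty^S\to\mathbb{N}_\infty^S$ is $D^{\mathrm{opt}'}(r)(s)=0$ for $s\in T$ and $1+\mathrm{opt}'_{a\in\mathrm{Act}(s)}\min_{s'\in\mathrm{Post}(s,a)}r(s')$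 for $s\notin T$. *)

theory Defs
  imports "HOL-Analysis.Analysis" "HOL-Library.Extended_Nat"
begin

definition is_mdp :: "('s::finite \<Rightarrow> 'act::finite \<Rightarrow> 's \<Rightarrow> real) \<Rightarrow> bool" where
  "is_mdp P \<longleftrightarrow>
     (\<forall>s a s'. 0 \<le> P s a s' \<and> P s a s' \<le> 1) \<and>
     (\<forall>s a. (\<Sum>s'\<in>UNIV. P s a s') \<in> {0, 1}) \<and>
     (\<forall>s. \<exists>a. (\<Sum>s'\<in>UNIV. P s a s') = 1)"

definition Act :: "('s::finite \<Rightarrow> 'act::finite \<Rightarrow> 's \<Rightarrow> real) \<Rightarrow> 's \<Rightarrow> 'act set" where
  "Act P s = {a. (\<Sum>s'\<in>UNIV. P s a s') = 1}"

definition Post :: "('s \<Rightarrow> 'act \<Rightarrow> 's \<Rightarrow> real) \<Rightarrow> 's \<Rightarrow> 'act \<Rightarrow> 's set" where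
  "Post P s a = {s'. P s a s' > 0}"

text \<open>Memoryless deterministic strategies.\<close>
definition strategies :: "('s::finite \<Rightarrow> 'act::finite \<Rightarrow> 's \<Rightarrow> real) \<Rightarrow> ('s \<Rightarrow> 'act) set" where
  "strategies P = {\<sigma>. \<forall>s. \<sigma> s \<in> Act P s}"

fun reach_within :: "('s::finite \<Rightarrow> 'act \<Rightarrow> 's \<Rightarrow> real) \<Rightarrow> ('s \<Rightarrow> 'act) \<Rightarrow> 's set \<Rightarrow> nat \<Rightarrow> 's \<Rightarrow> real" where
  "reach_within P \<sigma> T 0 s = (if s \<in> T then 1 else 0)"
| "reach_within P \<sigma> T (Suc n) s =
     (if s \<in> T then 1 else (\<Sum>s'\<in>UNIV. P s (\<sigma> s) s' * reach_within P \<sigma> T n s'))"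

text \<open>Pr^\<sigma>_s(\<Diamond>T): the probability of eventually visiting T, i.e. the supremum
  (= limit, by continuity of measure) of the probabilities of visiting T within n steps.\<close>
definition reach_prob :: "('s::finite \<Rightarrow> 'act \<Rightarrow> 's \<Rightarrow> real) \<Rightarrow> ('s \<Rightarrow> 'act) \<Rightarrow> 's set \<Rightarrow> 's \<Rightarrow> real" where
  "reach_prob P \<sigma> T s = (SUP n. reach_within P \<sigma> T n s)"

datatype optimum = OMin | OMax

fun dual :: "optimum \<Rightarrow> optimum" where
  "dual OMin = OMax" | "dual OMax = OMin"

fun opt_of :: "optimum \<Rightarrow> 'b::linorder set \<Rightarrow> 'b" where
  "opt_of OMin A = Min A" | "opt_of OMax A = Max A"

definition opt_reach_prob :: "optimum \<Rightarrow> ('s::finite \<Rightarrow> 'act::finite \<Rightarrow> 's \<Rightarrow> real) \<Rightarrow> 's set \<Rightarrow> 's \<Rightarrow> real" where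
  "opt_reach_prob opt P T s = opt_of opt ((\<lambda>\<sigma>. reach_prob P \<sigma> T s) ` strategies P)"

definition dist_op :: "optimum \<Rightarrow> ('s::finite \<Rightarrow> 'act::finite \<Rightarrow> 's \<Rightarrow> real) \<Rightarrow> 's set \<Rightarrow> ('s \<Rightarrow> enat) \<Rightarrow> 's \<Rightarrow> enat" where
  "dist_op opt' P T r s =
     (if s \<in> T then 0
      else 1 + opt_of opt' ((\<lambda>a. Min (r ` Post P s a)) ` Act P s))"

end

theory Submission
  imports Defs
begin

text \<open>Read r as an upper bound on the distance to T, and let \<open>D^\<sigma>\<close> be the distance
  operator of the Markov chain induced by a strategy \<sigma>. If \<open>D^\<sigma>(r) \<le> r\<close>, then from
  each state s \<notin> T with \<open>r s < \<infinity>\<close> the action \<sigma> s has a successor with strictly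
  smaller r; following such successors reaches T within \<open>r s\<close> steps along a path of
  positive probability. For opt = min, \<open>D^max(r) \<le> r\<close> gives \<open>D^\<sigma>(r) \<le> r\<close> for
  every strategy \<sigma>; for opt = max, \<open>D^min(r) \<le> r\<close> gives it for a strategy that
  always chooses a minimising action.\<close>

definition strategy_dist_op ::
    "('s \<Rightarrow> 'act \<Rightarrow> 's \<Rightarrow> real) \<Rightarrow> 's set \<Rightarrow> ('s \<Rightarrow> 'act) \<Rightarrow> ('s \<Rightarrow> enat) \<Rightarrow> 's \<Rightarrow> enat" where
  "strategy_dist_op P T \<sigma> r s = (if s \<in> T then 0 else 1 + Min (r ` Post P s (\<sigma> s)))"

lemma Act_nonempty: "is_mdp P \<Longrightarrow> Act P s \<noteq> {}"
  unfolding is_mdp_def Act_def by blast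

lemma strategies_nonempty:
  assumes "is_mdp P"
  shows "strategies P \<noteq> {}"
proof -
  have "\<forall>s. \<exists>a. a \<in> Act P s" using Act_nonempty[OF assms] by blast
  then obtain \<sigma> where "\<forall>s. \<sigma> s \<in> Act P s" by metis
  then show ?thesis unfolding strategies_def by blast
qed

lemma Post_nonempty:
  assumes "is_mdp P" and "a \<in> Act P s"
  shows "Post P s a \<noteq> {}"
proof
  assume "Post P s a = {}"
  then have "\<And>s'. P s a s' = 0"
    using assms(1) unfolding Post_def is_mdp_def by (metis empty_iff less_eq_real_def mem_Collect_eq)
  then show False using assms(2) unfolding Act_def by simp
qed

lemma reach_within_nonneg:
  assumes "is_mdp P"
  shows "0 \<le> reach_within P \<sigma> T n s"
proof (induction n arbitrary: s)
  case (Suc n)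
  have "\<And>s'. 0 \<le> P s (\<sigma> s) s'" using assms unfolding is_mdp_def by blast
  then show ?case using Suc by (simp add: sum_nonneg)
qed simp

lemma reach_within_le_1:
  assumes "is_mdp P" and "\<sigma> \<in> strategies P"
  shows "reach_within P \<sigma> T n s \<le> 1"
proof (induction n arbitrary: s)
  case (Suc n)
  have "\<And>s'. 0 \<le> P s (\<sigma> s) s'" using assms(1) unfolding is_mdp_def by blast
  then have "(\<Sum>s'\<in>UNIV. P s (\<sigma> s) s' * reach_within P \<sigma> T n s') \<le> (\<Sum>s'\<in>UNIV. P s (\<sigma> s) s')"
    by (intro sum_mono) (simp add: Suc mult_left_le)
  also have "\<dots> = 1" using assms(2) unfolding strategies_def Act_def by blast
  finally show ?case by simp
qed simp

lemma reach_within_le_reach_prob: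
  assumes "is_mdp P" and "\<sigma> \<in> strategies P"
  shows "reach_within P \<sigma> T n s \<le> reach_prob P \<sigma> T s"
  unfolding reach_prob_def
  by (rule cSUP_upper) (auto intro!: bdd_aboveI[where M=1] reach_within_le_1[OF assms])

lemma reach_within_Suc_pos:
  assumes "is_mdp P" and "s' \<in> Post P s (\<sigma> s)" and "0 < reach_within P \<sigma> T n s'"
  shows "0 < reach_within P \<sigma> T (Suc n) s"
proof -
  have nonneg: "0 \<le> P s (\<sigma> s) x * reach_within P \<sigma> T n x" for x
    using assms(1) reach_within_nonneg[OF assms(1)] unfolding is_mdp_def by simp
  have "0 < P s (\<sigma> s) s' * reach_within P \<sigma> T n s'"
    using assms(2,3) unfolding Post_def by simp
  also have "\<dots> \<le> (\<Sum>x\<in>UNIV. P s (\<sigma> s) x * reach_within P \<sigma> T n x)"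
    by (rule member_le_sum) (auto simp: nonneg)
  finally show ?thesis by simp
qed

lemma reach_within_pos_if_strategy_dist_op_le:
  assumes mdp: "is_mdp P" and \<sigma>: "\<sigma> \<in> strategies P"
    and le: "\<forall>s. strategy_dist_op P T \<sigma> r s \<le> r s"
  shows "r s \<le> enat k \<Longrightarrow> 0 < reach_within P \<sigma> T k s"
proof (induction k arbitrary: s)
  case 0
  then show ?case
    using le[rule_format, of s] by (auto simp: strategy_dist_op_def enat_0 plus_1_eSuc split: if_splits)
next
  case (Suc k)
  show ?case
  proof (cases "s \<in> T")
    case False
    have "Post P s (\<sigma> s) \<noteq> {}" using Post_nonempty[OF mdp] \<sigma> unfolding strategies_def by blast
    then have "Min (r ` Post P s (\<sigma> s)) \<in> r ` Post P s (\<sigma> s)" by (intro Min_in) auto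
    then obtain s' where s': "s' \<in> Post P s (\<sigma> s)" "r s' = Min (r ` Post P s (\<sigma> s))" by auto
    have "1 + r s' \<le> enat (Suc k)"
      using le[rule_format, of s] False Suc.prems s'(2) by (auto simp: strategy_dist_op_def)
    then have "r s' \<le> enat k" by (cases "r s'") (auto simp: one_enat_def)
    then show ?thesis using reach_within_Suc_pos[OF mdp s'(1) Suc.IH] by simp
  qed simp
qed

lemma reach_prob_pos_if_strategy_dist_op_le:
  assumes "is_mdp P" and "\<sigma> \<in> strategies P"
    and "\<forall>s. strategy_dist_op P T \<sigma> r s \<le> r s" and "r s < \<infinity>"
  shows "0 < reach_prob P \<sigma> T s"
proof -
  obtain k where "r s = enat k" using assms(4) by (cases "r s") auto
  then have "0 < reach_within P \<sigma> T k s"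
    using reach_within_pos_if_strategy_dist_op_le[OF assms(1-3)] by simp
  also have "\<dots> \<le> reach_prob P \<sigma> T s" by (rule reach_within_le_reach_prob[OF assms(1,2)])
  finally show ?thesis .
qed

lemma strategy_dist_op_le_dist_op_max:
  assumes "\<sigma> \<in> strategies P"
  shows "strategy_dist_op P T \<sigma> r s \<le> dist_op OMax P T r s"
proof -
  have "\<sigma> s \<in> Act P s" using assms unfolding strategies_def by blast
  then have "Min (r ` Post P s (\<sigma> s)) \<le> Max ((\<lambda>a. Min (r ` Post P s a)) ` Act P s)"
    by (intro Max_ge) auto
  then show ?thesis unfolding strategy_dist_op_def dist_op_def by (simp add: add_left_mono)
qed

lemma strategy_dist_op_eq_dist_op_min:
  assumes "is_mdp P"
  obtains \<sigma> where "\<sigma> \<in> strategies P" and "\<And>s. strategy_dist_op P T \<sigma> r s = dist_op OMin P T r s"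
proof -
  let ?val = "\<lambda>s a. Min (r ` Post P s a)"
  have "\<exists>a \<in> Act P s. ?val s a = Min (?val s ` Act P s)" for s
    using Min_in[of "?val s ` Act P s"] Act_nonempty[OF assms] by fastforce
  then obtain \<sigma> where "\<And>s. \<sigma> s \<in> Act P s \<and> ?val s (\<sigma> s) = Min (?val s ` Act P s)" by metis
  then show ?thesis
    by (intro that) (auto simp: strategies_def strategy_dist_op_def dist_op_def)
qed

theorem proposition1:
  fixes P :: "'s::finite \<Rightarrow> 'act::finite \<Rightarrow> 's \<Rightarrow> real"
    and T :: "'s set" and opt :: optimum and r :: "'s \<Rightarrow> enat"
  assumes "is_mdp P"
    and "\<forall>s. dist_op (dual opt) P T r s \<le> r s"
  shows "\<forall>s. r s < \<infinity> \<longrightarrow> opt_reach_prob opt P T s > 0"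
proof (intro allI impI)
  fix s assume fin: "r s < \<infinity>"
  show "opt_reach_prob opt P T s > 0"
  proof (cases opt)
    case OMin
    have "0 < reach_prob P \<sigma> T s" if \<sigma>: "\<sigma> \<in> strategies P" for \<sigma>
    proof -
      have "\<forall>t. strategy_dist_op P T \<sigma> r t \<le> r t"
        using strategy_dist_op_le_dist_op_max[OF \<sigma>] assms(2) OMin by (metis dual.simps(1) order_trans)
      then show ?thesis
        using reach_prob_pos_if_strategy_dist_op_le[where r=r and s=s, OF assms(1) \<sigma> _ fin] by blast
    qed
    then show ?thesis
      using OMin strategies_nonempty[OF assms(1)] by (simp add: opt_reach_prob_def Min_gr_iff)
  next
    case OMax
    obtain \<sigma> where \<sigma>: "\<sigma> \<in> strategies P" and "\<And>t. strategy_dist_op P T \<sigma> r t = dist_op OMin P T r t"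
      using strategy_dist_op_eq_dist_op_min[OF assms(1), where T=T and r=r] by blast
    then have "\<forall>t. strategy_dist_op P T \<sigma> r t \<le> r t" using assms(2) OMax by simp
    then have "0 < reach_prob P \<sigma> T s"
      using reach_prob_pos_if_strategy_dist_op_le[where r=r and s=s, OF assms(1) \<sigma> _ fin] by blast
    also have "\<dots> \<le> Max ((\<lambda>\<sigma>. reach_prob P \<sigma> T s) ` strategies P)"
      using \<sigma> by (intro Max_ge) auto
    finally show ?thesis using OMax by (simp add: opt_reach_prob_def)
  qed
qed

end
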